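(* Let $\mathbf{v}_1,\ldots,\mathbf{v}_k$ be orthogonal unit vectors in $\mathbb{R}^k$, let $F:\mathbb{R}^{kn}\to\mathbb{R}$ be \[ F(\mathbf{w}_1,\ldots,\mathbf{w}_n)=\mathbb{E}_{\mathbf{x}\sim\mathcal{N}(\mathbf{0},I_k)}\left[\frac{1}{2}\left(\sum_{i=1}^{n}[\mathbf{w}_i^\top\mathbf{x}]_+-\sum_{i=1}^{k}[\mathbf{v}_i^\top\mathbf{x}]_+\right)^2\right], \] and let $\mathbf{w}=(\mathbf{w}_1,\ldots,\mathbf{w}_n)\in\mathbb{R}^{kn}$ and $\alpha>0$ be such that $F$ is thrice differentiable on an open set containing the closed ball of radius $\alpha$ centered at $\mathbf{w}$. For a unit vector $\mathbf{u}\in\mathbb{R}^{kn}$ and $t\in(0,\alpha]$ let $R_{\mathbf{w},\mathbf{u},t}$ be the number with $F(\mathbf{w}+t\mathbf{u})=F(\mathbf{w})+t\nabla F(\mathbf{w})^\top\mathbf{u}+\tfrac{1}{2}t^2\mathbf{u}^\top\nabla^2F(\mathbf{w})\mathbf{u}+\tfrac{1}{6}t^3R_{\mathbf{w},\mathbf{u},t}$. Assume that for some $\epsilon,B>0$, $\|\nabla F(\mathbf{w})\|\le\epsilon$ and $\sup_{t\in(0,\alpha],\|\mathbf{u}\|=1}|R_{\mathbf{w},\mathbf{u},t}|\le B$; that the smallest eigenvalue $\lambda_{\min}$ of $\nabla^2F(\mathbf{w})$ is positive; that $9\lambda_{\min}^2-25B\epsilon\ge0$; and that $r:=\frac{3\lambda_{\min}-\sqrt{9\lambda_{\min}^2-25B\epsilon}}{2B}$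 satisfies $r<\alpha$ and $r<\min_i\|\mathbf{w}_i\|$. If moreover \[ F(\mathbf{w})>r^2\left(\frac{1}{2}+n(n-1)\left(\frac{\max_i\|\mathbf{w}_i\|+r}{2\pi(\min_i\|\mathbf{w}_i\|-r)}+\frac{1}{2}\right)+\frac{nk\max_i\|\mathbf{v}_i\|}{2\pi(\min_i\|\mathbf{w}_i\|-r)}\right)+r\epsilon, \] then $F$ has a local minimum $\mathbf{w}^*$ with $\|\mathbf{w}^*-\mathbf{w}\|\le r$ which is not a global minimum (i.e. $F(\mathbf{w}^* )>\inf F=0$).
   Context: $[z]_+=\max\{0,z\}$. A local minimum of $F$ is a point $\mathbf{w}^*$ with $F(\mathbf{w}^* )\le F(\mathbf{w}')$ for all $\mathbf{w}'$ in some open neighborhood of $\mathbf{w}^*$. Norms are Euclidean. *)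

theory Defs
  imports "HOL-Analysis.Analysis" "HOL-Probability.Probability"
begin

definition relu :: "real \<Rightarrow> real" where
  "relu z = max 0 z"

definition gauss_exp :: "(real^'k \<Rightarrow> real) \<Rightarrow> real" where
  "gauss_exp f = (\<integral>x. (\<Prod>j\<in>UNIV. std_normal_density (x$j)) * f x \<partial>lborel)"

definition Floss :: "real^'k^'k \<Rightarrow> real^'k^'n \<Rightarrow> real" where
  "Floss v w = gauss_exp (\<lambda>x. (1/2) *
      ((\<Sum>i\<in>UNIV. relu (w$i \<bullet> x)) - (\<Sum>i\<in>UNIV. relu (v$i \<bullet> x)))\<^sup>2)"

definition grad_of :: "('a::euclidean_space \<Rightarrow>\<^sub>L real) \<Rightarrow> 'a" where
  "grad_of D = (\<Sum>b\<in>Basis. D b *\<^sub>R b)"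

definition hess_op :: "('a::euclidean_space \<Rightarrow>\<^sub>L 'a \<Rightarrow>\<^sub>L real) \<Rightarrow> 'a \<Rightarrow> 'a" where
  "hess_op H u = (\<Sum>b\<in>Basis. H u b *\<^sub>R b)"

definition min_eig :: "('a::euclidean_space \<Rightarrow>\<^sub>L 'a \<Rightarrow>\<^sub>L real) \<Rightarrow> real" where
  "min_eig H = Min {c. \<exists>u. u \<noteq> 0 \<and> hess_op H u = c *\<^sub>R u}"

definition taylor_R :: "('a::real_normed_vector \<Rightarrow> real) \<Rightarrow> ('a \<Rightarrow>\<^sub>L real) \<Rightarrow>
    ('a \<Rightarrow>\<^sub>L 'a \<Rightarrow>\<^sub>L real) \<Rightarrow> 'a \<Rightarrow> 'a \<Rightarrow> real \<Rightarrow> real" where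
  "taylor_R F D1 D2 w u t =
     6 / t^3 * (F (w + t *\<^sub>R u) - F w - t * D1 u - t\<^sup>2 / 2 * D2 u u)"

definition local_min :: "('a::topological_space \<Rightarrow> real) \<Rightarrow> 'a \<Rightarrow> bool" where
  "local_min F x \<longleftrightarrow> (\<exists>S. open S \<and> x \<in> S \<and> (\<forall>y\<in>S. F x \<le> F y))"

end

theory Submission
  imports Defs
begin

text \<open>Taylor expansion to third order with \<open>\<parallel>\<nabla>F(w)\<parallel> \<le> \<epsilon>\<close>, Hessian at least \<open>\<lambda>\<close> on unit vectors
  and remainder at most \<open>B\<close> gives
  \<open>F(w + t u) \<ge> F(w) - t \<epsilon> + t\<^sup>2 (\<lambda>/2 - t B/6)\<close>. At the radius \<open>r\<close>, the smaller root of
  \<open>B r\<^sup>2 - 3 \<lambda> r + 25 \<epsilon> / 4 = 0\<close>, the right-hand side exceeds \<open>F(w)\<close>, so the minimum of \<open>F\<close>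
  on the closed ball of radius \<open>r\<close> is attained in the interior and is a local minimum;
  its value is at least \<open>F(w) - r \<epsilon>\<close>, which the hypothesis on \<open>F(w)\<close> makes positive.
  The lower bound on the Hessian form comes from the smallest eigenvalue, which needs
  the Hessian to be symmetric (Schwarz's theorem, from continuity of the second derivative).\<close>

lemma has_real_derivative_along_line:
  fixes f :: "'a::real_normed_vector \<Rightarrow> real"
  assumes "(f has_derivative D) (at (a + s *\<^sub>R d))"
  shows "((\<lambda>t. f (a + t *\<^sub>R d)) has_real_derivative D d) (at s)"
proof -
  have line: "((\<lambda>t. a + t *\<^sub>R d) has_derivative (\<lambda>t. t *\<^sub>R d)) (at s)"
    by (auto intro!: derivative_eq_intros)
  have "linear D" using assms has_derivative_linear by blast
  moreover have "((\<lambda>t. f (a + t *\<^sub>R d)) has_derivative (\<lambda>t. D (t *\<^sub>R d))) (at s)"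
    by (rule has_derivative_compose[OF line assms])
  ultimately show ?thesis
    unfolding has_field_derivative_def
    by (elim has_derivative_eq_rhs) (auto simp: linear_scale)
qed

lemma abs_blinfun_apply2_diff_le:
  fixes L M :: "'a::real_normed_vector \<Rightarrow>\<^sub>L 'b::real_normed_vector \<Rightarrow>\<^sub>L real"
  assumes "norm (L - M) \<le> e"
  shows "\<bar>L a b - M a b\<bar> \<le> e * norm a * norm b"
proof -
  have "\<bar>L a b - M a b\<bar> = \<bar>(L - M) a b\<bar>" by (simp add: blinfun.diff_left)
  also have "\<dots> \<le> norm ((L - M) a) * norm b" using norm_blinfun[of "(L - M) a" b] by simp
  also have "\<dots> \<le> norm (L - M) * norm a * norm b"
    by (intro mult_right_mono norm_blinfun) auto
  also have "\<dots> \<le> e * norm a * norm b"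
    using assms by (intro mult_right_mono) auto
  finally show ?thesis .
qed

text \<open>Two applications of the mean value theorem, first along \<open>x\<close>, then along \<open>y\<close>.\<close>

lemma second_difference_mean_value:
  fixes f :: "'a::real_normed_vector \<Rightarrow> real" and f1 :: "'a \<Rightarrow> ('a \<Rightarrow>\<^sub>L real)"
    and f2 :: "'a \<Rightarrow> ('a \<Rightarrow>\<^sub>L 'a \<Rightarrow>\<^sub>L real)"
  assumes d1: "\<And>z. z \<in> ball w \<rho> \<Longrightarrow> (f has_derivative blinfun_apply (f1 z)) (at z)"
    and d2: "\<And>z. z \<in> ball w \<rho> \<Longrightarrow> (f1 has_derivative blinfun_apply (f2 z)) (at z)"
    and h: "h > 0" "h * (norm x + norm y) < \<rho>"
  shows "\<exists>z. dist z w \<le> h * (norm x + norm y) \<and>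
     f (w + h *\<^sub>R x + h *\<^sub>R y) - f (w + h *\<^sub>R x) - f (w + h *\<^sub>R y) + f w = h\<^sup>2 * f2 z y x"
proof -
  have dist_le: "dist (w + s *\<^sub>R x + t *\<^sub>R y) w \<le> h * (norm x + norm y)"
    if "0 \<le> s" "s \<le> h" "0 \<le> t" "t \<le> h" for s t
  proof -
    have "norm (s *\<^sub>R x + t *\<^sub>R y) \<le> s * norm x + t * norm y"
      using norm_triangle_ineq[of "s *\<^sub>R x" "t *\<^sub>R y"] that by simp
    also have "\<dots> \<le> h * norm x + h * norm y"
      using that by (intro add_mono mult_right_mono) auto
    finally show ?thesis by (simp add: dist_norm algebra_simps)
  qed
  have in_ball: "w + s *\<^sub>R x + t *\<^sub>R y \<in> ball w \<rho>" if "0 \<le> s" "s \<le> h" "0 \<le> t" "t \<le> h" for s t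
    using dist_le[OF that] h by (simp add: dist_commute)
  define g where "g s = f (w + s *\<^sub>R x + h *\<^sub>R y) - f (w + s *\<^sub>R x)" for s
  have dg: "DERIV g s :> f1 (w + s *\<^sub>R x + h *\<^sub>R y) x - f1 (w + s *\<^sub>R x) x" if "0 \<le> s" "s \<le> h" for s
  proof -
    have "(f has_derivative blinfun_apply (f1 (w + s *\<^sub>R x + h *\<^sub>R y))) (at ((w + h *\<^sub>R y) + s *\<^sub>R x))"
      using d1[OF in_ball[of s h]] that h by (simp add: add_ac)
    moreover have "(f has_derivative blinfun_apply (f1 (w + s *\<^sub>R x))) (at (w + s *\<^sub>R x))"
      using d1[OF in_ball[of s 0]] that h by simp
    ultimately have "((\<lambda>s. f ((w + h *\<^sub>R y) + s *\<^sub>R x) - f (w + s *\<^sub>R x)) has_real_derivative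
        f1 (w + s *\<^sub>R x + h *\<^sub>R y) x - f1 (w + s *\<^sub>R x) x) (at s)"
      by (intro DERIV_diff has_real_derivative_along_line)
    then show ?thesis unfolding g_def by (simp add: add_ac)
  qed
  then obtain \<xi> where xi: "0 < \<xi>" "\<xi> < h"
    "g h - g 0 = h * (f1 (w + \<xi> *\<^sub>R x + h *\<^sub>R y) x - f1 (w + \<xi> *\<^sub>R x) x)"
    using MVT2[OF h(1) dg] by auto
  define k where "k t = f1 (w + \<xi> *\<^sub>R x + t *\<^sub>R y) x" for t
  have dk: "DERIV k t :> f2 (w + \<xi> *\<^sub>R x + t *\<^sub>R y) y x" if "0 \<le> t" "t \<le> h" for t
  proof -
    have "((\<lambda>z. f1 z x) has_derivative (\<lambda>d. f2 (w + \<xi> *\<^sub>R x + t *\<^sub>R y) d x)) (at (w + \<xi> *\<^sub>R x + t *\<^sub>R y))"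
      using d2[OF in_ball[of \<xi> t]] xi that by (auto intro!: derivative_eq_intros)
    from has_real_derivative_along_line[OF this] show ?thesis unfolding k_def .
  qed
  then obtain \<eta> where eta: "0 < \<eta>" "\<eta> < h"
    "k h - k 0 = h * f2 (w + \<xi> *\<^sub>R x + \<eta> *\<^sub>R y) y x"
    using MVT2[OF h(1) dk] by auto
  show ?thesis
  proof (intro exI conjI)
    show "dist (w + \<xi> *\<^sub>R x + \<eta> *\<^sub>R y) w \<le> h * (norm x + norm y)"
      using dist_le xi eta by auto
    show "f (w + h *\<^sub>R x + h *\<^sub>R y) - f (w + h *\<^sub>R x) - f (w + h *\<^sub>R y) + f w
        = h\<^sup>2 * f2 (w + \<xi> *\<^sub>R x + \<eta> *\<^sub>R y) y x"
      using xi(3) eta(3) unfolding g_def k_def by (simp add: power2_eq_square)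
  qed
qed

lemma second_derivative_symmetric:
  fixes f :: "'a::real_normed_vector \<Rightarrow> real" and f1 :: "'a \<Rightarrow> ('a \<Rightarrow>\<^sub>L real)"
    and f2 :: "'a \<Rightarrow> ('a \<Rightarrow>\<^sub>L 'a \<Rightarrow>\<^sub>L real)"
  assumes U: "open U" "w \<in> U"
    and d1: "\<And>z. z \<in> U \<Longrightarrow> (f has_derivative blinfun_apply (f1 z)) (at z)"
    and d2: "\<And>z. z \<in> U \<Longrightarrow> (f1 has_derivative blinfun_apply (f2 z)) (at z)"
    and cont: "isCont f2 w"
  shows "f2 w x y = f2 w y x"
proof -
  define C where "C = 2 * norm x * norm y + 1"
  have C: "C > 0" unfolding C_def by (simp add: add_nonneg_pos)
  have close: "\<bar>f2 w x y - f2 w y x\<bar> \<le> e * C" if e: "e > 0" for e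
  proof -
    obtain \<rho> where \<rho>: "\<rho> > 0" "ball w \<rho> \<subseteq> U" using U openE by blast
    obtain \<delta> where \<delta>: "\<delta> > 0" "\<And>z. dist z w < \<delta> \<Longrightarrow> dist (f2 z) (f2 w) < e"
      using cont e unfolding continuous_at_eps_delta by blast
    define h where "h = min \<rho> \<delta> / (2 * (norm x + norm y + 1))"
    have xy: "norm x + norm y + 1 > 0" by (simp add: add_nonneg_pos)
    have h: "h > 0" using \<rho> \<delta> xy unfolding h_def by simp
    have "h * (norm x + norm y) \<le> h * (norm x + norm y + 1)" using h by simp
    also have "\<dots> = min \<rho> \<delta> / 2" unfolding h_def using xy by (simp add: field_simps)
    also have "\<dots> < min \<rho> \<delta>" using \<rho> \<delta> by (simp add: min_def)
    finally have h_small: "h * (norm x + norm y) < min \<rho> \<delta>" .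
    have d1': "\<And>z. z \<in> ball w \<rho> \<Longrightarrow> (f has_derivative blinfun_apply (f1 z)) (at z)"
      and d2': "\<And>z. z \<in> ball w \<rho> \<Longrightarrow> (f1 has_derivative blinfun_apply (f2 z)) (at z)"
      using d1 d2 \<rho> by auto
    obtain z1 where z1: "dist z1 w \<le> h * (norm x + norm y)"
      "f (w + h *\<^sub>R x + h *\<^sub>R y) - f (w + h *\<^sub>R x) - f (w + h *\<^sub>R y) + f w = h\<^sup>2 * f2 z1 y x"
      using second_difference_mean_value[where x=x and y=y, OF d1' d2' h] h_small by auto
    obtain z2 where z2: "dist z2 w \<le> h * (norm x + norm y)"
      "f (w + h *\<^sub>R y + h *\<^sub>R x) - f (w + h *\<^sub>R y) - f (w + h *\<^sub>R x) + f w = h\<^sup>2 * f2 z2 x y"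
      using second_difference_mean_value[where x=y and y=x, OF d1' d2' h] h_small by (auto simp: add.commute)
    have "h\<^sup>2 * f2 z1 y x = h\<^sup>2 * f2 z2 x y"
      using z1(2) z2(2) by (simp add: algebra_simps)
    then have swap: "f2 z1 y x = f2 z2 x y" using h by simp
    have "norm (f2 z1 - f2 w) \<le> e" "norm (f2 z2 - f2 w) \<le> e"
      using \<delta>(2)[of z1] \<delta>(2)[of z2] z1(1) z2(1) h_small by (auto simp: dist_norm)
    then have "\<bar>f2 z1 y x - f2 w y x\<bar> \<le> e * norm x * norm y"
      "\<bar>f2 z2 x y - f2 w x y\<bar> \<le> e * norm x * norm y"
      using abs_blinfun_apply2_diff_le[of "f2 z1" "f2 w" e y x]
        abs_blinfun_apply2_diff_le[of "f2 z2" "f2 w" e x y] by (simp_all add: ac_simps)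
    then have "\<bar>f2 w x y - f2 w y x\<bar> \<le> 2 * e * norm x * norm y" using swap by linarith
    also have "\<dots> \<le> e * C" using e unfolding C_def by (simp add: algebra_simps)
    finally show ?thesis .
  qed
  have "\<bar>f2 w x y - f2 w y x\<bar> \<le> 0"
  proof (rule field_le_epsilon)
    fix \<epsilon> :: real assume "\<epsilon> > 0"
    with close[of "\<epsilon> / C"] C show "\<bar>f2 w x y - f2 w y x\<bar> \<le> 0 + \<epsilon>" by simp
  qed
  then show ?thesis by simp
qed

lemma inner_grad_of: "grad_of D \<bullet> u = D u"
proof -
  have "grad_of D \<bullet> u = (\<Sum>b\<in>Basis. D b * (b \<bullet> u))"
    unfolding grad_of_def by (simp add: inner_sum_left)
  also have "\<dots> = D (\<Sum>b\<in>Basis. (u \<bullet> b) *\<^sub>R b)"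
    by (simp add: blinfun.sum_right blinfun.scaleR_right inner_commute mult.commute)
  finally show ?thesis by (simp add: euclidean_representation)
qed

lemma inner_hess_op: "hess_op H u \<bullet> y = H u y"
proof -
  have "hess_op H u \<bullet> y = (\<Sum>b\<in>Basis. H u b * (b \<bullet> y))"
    unfolding hess_op_def by (simp add: inner_sum_left)
  also have "\<dots> = H u (\<Sum>b\<in>Basis. (y \<bullet> b) *\<^sub>R b)"
    by (simp add: blinfun.sum_right blinfun.scaleR_right inner_commute mult.commute)
  finally show ?thesis by (simp add: euclidean_representation)
qed

lemma hess_op_eigenvectors_orthogonal:
  fixes H :: "'a::euclidean_space \<Rightarrow>\<^sub>L 'a \<Rightarrow>\<^sub>L real"
  assumes sym: "\<And>x y. H x y = H y x"
    and "hess_op H u = c *\<^sub>R u" "hess_op H v = d *\<^sub>R v" "c \<noteq> d"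
  shows "u \<bullet> v = 0"
proof -
  have "c * (u \<bullet> v) = H u v" using inner_hess_op[of H u v] assms(2) by simp
  also have "\<dots> = H v u" by (rule sym)
  also have "\<dots> = d * (u \<bullet> v)" using inner_hess_op[of H v u] assms(3) by (simp add: inner_commute)
  finally show ?thesis using assms(4) by (simp add: algebra_simps)
qed

lemma finite_hess_op_eigenvalues:
  fixes H :: "'a::euclidean_space \<Rightarrow>\<^sub>L 'a \<Rightarrow>\<^sub>L real"
  assumes sym: "\<And>x y. H x y = H y x"
  shows "finite {c. \<exists>u. u \<noteq> 0 \<and> hess_op H u = c *\<^sub>R u}" (is "finite ?S")
proof -
  obtain e where e: "\<And>c. c \<in> ?S \<Longrightarrow> e c \<noteq> 0 \<and> hess_op H (e c) = c *\<^sub>R e c"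
    using bchoice[of ?S "\<lambda>c u. u \<noteq> 0 \<and> hess_op H u = c *\<^sub>R u"] by auto
  have orth: "e c \<bullet> e d = 0" if "c \<in> ?S" "d \<in> ?S" "c \<noteq> d" for c d
    using hess_op_eigenvectors_orthogonal[OF sym] e that by blast
  have "inj_on e ?S"
  proof (rule inj_onI)
    fix c d assume cd: "c \<in> ?S" "d \<in> ?S" "e c = e d"
    show "c = d"
      using orth[OF cd(1,2)] e[OF cd(1)] cd(3) by (metis inner_eq_zero_iff)
  qed
  moreover have "independent (e ` ?S)"
  proof (rule pairwise_orthogonal_independent)
    show "pairwise orthogonal (e ` ?S)"
      unfolding pairwise_def orthogonal_def by (auto intro!: orth)
    show "0 \<notin> e ` ?S" using e by force
  qed
  ultimately show ?thesis using finiteI_independent finite_imageD by blast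
qed

lemma linear_coeff_zero_if_quadratic_nonneg:
  fixes a b :: real
  assumes "b \<ge> 0" and nonneg: "\<And>t. t * a + t\<^sup>2 * b \<ge> 0"
  shows "a = 0"
proof -
  define t where "t = - a / (b + 1)"
  have tb: "t * (b + 1) = - a" unfolding t_def using assms(1) by simp
  have "(b + 1)\<^sup>2 * (t * a + t\<^sup>2 * b) = (b + 1) * (t * (b + 1)) * a + (t * (b + 1))\<^sup>2 * b"
    by (simp add: power2_eq_square algebra_simps)
  also have "\<dots> = - a\<^sup>2" unfolding tb by (simp add: power2_eq_square algebra_simps)
  finally have "(b + 1)\<^sup>2 * (t * a + t\<^sup>2 * b) = - a\<^sup>2" .
  moreover have "0 \<le> (b + 1)\<^sup>2 * (t * a + t\<^sup>2 * b)" using nonneg[of t] by simp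
  ultimately show ?thesis by simp
qed

text \<open>A unit vector minimising the quadratic form is an eigenvector: the form
  \<open>H x x - c \<parallel>x\<parallel>\<^sup>2\<close> is nonnegative and vanishes at \<open>u\<close>, so its first variation at \<open>u\<close> vanishes.\<close>

lemma quadratic_form_minimiser_eigenvector:
  fixes H :: "'a::euclidean_space \<Rightarrow>\<^sub>L 'a \<Rightarrow>\<^sub>L real"
  assumes sym: "\<And>x y. H x y = H y x" and u: "norm u = 1"
    and min: "\<And>x. H u u * (norm x)\<^sup>2 \<le> H x x"
  shows "hess_op H u = H u u *\<^sub>R u"
proof (rule euclidean_eqI)
  fix b :: 'a
  define c where "c = H u u"
  define a where "a = 2 * (H u b - c * (u \<bullet> b))"
  have "t * a + t\<^sup>2 * (H b b - c * (norm b)\<^sup>2) \<ge> 0" for t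
  proof -
    have "u \<bullet> u = 1" using u by (simp add: norm_eq_sqrt_inner)
    then have "(norm (u + t *\<^sub>R b))\<^sup>2 = 1 + 2 * t * (u \<bullet> b) + t\<^sup>2 * (norm b)\<^sup>2"
      unfolding power2_norm_eq_inner
      by (simp add: inner_add_left inner_add_right inner_commute algebra_simps power2_eq_square)
    moreover have "H (u + t *\<^sub>R b) (u + t *\<^sub>R b) = H u u + 2 * t * H u b + t\<^sup>2 * H b b"
      using sym[of b u]
      by (simp add: blinfun.add_left blinfun.add_right blinfun.scaleR_left blinfun.scaleR_right
          algebra_simps power2_eq_square)
    ultimately show ?thesis
      using min[of "u + t *\<^sub>R b"] unfolding a_def c_def by (simp add: algebra_simps)
  qed
  moreover have "H b b - c * (norm b)\<^sup>2 \<ge> 0" using min[of b] by (simp add: c_def)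
  ultimately have "a = 0" using linear_coeff_zero_if_quadratic_nonneg by blast
  then show "hess_op H u \<bullet> b = (H u u *\<^sub>R u) \<bullet> b"
    by (simp add: a_def c_def inner_hess_op)
qed

lemma min_eig_le_quadratic_form:
  fixes H :: "'a::euclidean_space \<Rightarrow>\<^sub>L 'a \<Rightarrow>\<^sub>L real"
  assumes sym: "\<And>x y. H x y = H y x" and u: "norm u = 1"
  shows "min_eig H \<le> H u u"
proof -
  have "continuous_on (sphere 0 1) (\<lambda>u. H u u)" by (intro continuous_intros)
  moreover have "sphere (0::'a) 1 \<noteq> {}" using u by auto
  ultimately obtain u0 where u0: "u0 \<in> sphere 0 1"
    and u0_min: "\<And>y. y \<in> sphere 0 1 \<Longrightarrow> H u0 u0 \<le> H y y"
    using continuous_attains_inf[OF compact_sphere] by blast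
  have "H u0 u0 * (norm x)\<^sup>2 \<le> H x x" for x
  proof (cases "x = 0")
    case False
    then have "H u0 u0 \<le> H ((1 / norm x) *\<^sub>R x) ((1 / norm x) *\<^sub>R x)"
      by (intro u0_min) simp
    also have "\<dots> = H x x / (norm x)\<^sup>2"
      by (simp add: blinfun.scaleR_left blinfun.scaleR_right power2_eq_square)
    finally show ?thesis using False by (simp add: field_simps)
  qed simp
  then have "hess_op H u0 = H u0 u0 *\<^sub>R u0"
    using quadratic_form_minimiser_eigenvector[OF sym] u0 by simp
  moreover have "u0 \<noteq> 0" using u0 by auto
  ultimately have "min_eig H \<le> H u0 u0"
    unfolding min_eig_def by (intro Min_le finite_hess_op_eigenvalues[OF sym]) blast
  also have "\<dots> \<le> H u u" using u0_min u by simp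
  finally show ?thesis .
qed

lemma taylor_R_lower_bound:
  fixes F :: "'a::euclidean_space \<Rightarrow> real" and D1 :: "'a \<Rightarrow>\<^sub>L real"
    and D2 :: "'a \<Rightarrow>\<^sub>L 'a \<Rightarrow>\<^sub>L real"
  assumes grad: "norm (grad_of D1) \<le> \<epsilon>" and hess: "\<And>u. norm u = 1 \<Longrightarrow> lmin \<le> D2 u u"
    and R: "\<bar>taylor_R F D1 D2 w u t\<bar> \<le> B" and t: "t > 0" and u: "norm u = 1"
  shows "F w - t * \<epsilon> + t\<^sup>2 * (lmin / 2 - t * B / 6) \<le> F (w + t *\<^sub>R u)"
proof -
  define X where "X = F (w + t *\<^sub>R u) - F w - t * D1 u - t\<^sup>2 / 2 * D2 u u"
  have "\<bar>6 / t ^ 3 * X\<bar> \<le> B" using R unfolding X_def taylor_R_def by simp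
  then have "- B \<le> 6 / t ^ 3 * X" by (simp only: abs_le_iff) linarith
  then have "t ^ 3 / 6 * (- B) \<le> t ^ 3 / 6 * (6 / t ^ 3 * X)"
    using t by (intro mult_left_mono) auto
  then have remainder: "- B * t ^ 3 / 6 \<le> X" using t by (simp add: mult.commute)
  have "\<bar>D1 u\<bar> \<le> \<epsilon>"
    using Cauchy_Schwarz_ineq2[of "grad_of D1" u] grad u by (simp add: inner_grad_of)
  then have "t * (- \<epsilon>) \<le> t * D1 u"
    using t by (intro mult_left_mono) (auto simp: abs_le_iff)
  then have gradient: "- t * \<epsilon> \<le> t * D1 u" by simp
  have quadratic: "t\<^sup>2 / 2 * lmin \<le> t\<^sup>2 / 2 * D2 u u"
    using hess[OF u] by (simp add: mult_left_mono)
  from remainder gradient quadratic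
  have "F w - t * \<epsilon> + t\<^sup>2 / 2 * lmin - B * t ^ 3 / 6 \<le> F (w + t *\<^sub>R u)"
    unfolding X_def by linarith
  then show ?thesis by (simp add: power2_eq_square power3_eq_cube algebra_simps)
qed

text \<open>The radius \<open>r\<close> is the smaller root of \<open>B r\<^sup>2 - 3 lmin r + 25 \<epsilon> / 4 = 0\<close>;
  the constant \<open>25/4\<close> makes the Taylor lower bound at radius \<open>r\<close> exceed \<open>F w\<close> by \<open>r \<epsilon> / 24\<close>.\<close>

lemma taylor_radius_properties:
  fixes lmin B \<epsilon> r :: real
  assumes lmin: "lmin > 0" and B: "B > 0" and "\<epsilon> > 0" and disc: "9 * lmin\<^sup>2 - 25 * B * \<epsilon> \<ge> 0"
    and r_def: "r = (3 * lmin - sqrt (9 * lmin\<^sup>2 - 25 * B * \<epsilon>)) / (2 * B)"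
  shows "r > 0" "r * B < 3 * lmin" "r\<^sup>2 * (lmin / 2 - r * B / 6) = 25 / 24 * (r * \<epsilon>)"
proof -
  define s where "s = sqrt (9 * lmin\<^sup>2 - 25 * B * \<epsilon>)"
  have r: "r = (3 * lmin - s) / (2 * B)" unfolding r_def s_def ..
  have s_nonneg: "s \<ge> 0" unfolding s_def using disc by simp
  have s_sq: "s\<^sup>2 = 9 * lmin\<^sup>2 - 25 * B * \<epsilon>" unfolding s_def using disc by simp
  have "s\<^sup>2 < (3 * lmin)\<^sup>2" using s_sq B \<open>\<epsilon> > 0\<close> by (simp add: power_mult_distrib)
  then have "s < 3 * lmin" by (rule power2_less_imp_less) (use lmin in simp)
  then show "r > 0" unfolding r using B by simp
  show "r * B < 3 * lmin" unfolding r using s_nonneg lmin B by simp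
  have "B * r\<^sup>2 - 3 * lmin * r = ((3 * lmin - s)\<^sup>2 - 2 * 3 * lmin * (3 * lmin - s)) / (4 * B)"
    unfolding r using B by (simp add: field_simps power2_eq_square)
  also have "\<dots> = (s\<^sup>2 - 9 * lmin\<^sup>2) / (4 * B)" by (simp add: power2_eq_square algebra_simps)
  also have "\<dots> = - 25 * \<epsilon> / 4" unfolding s_sq using B by (simp add: field_simps)
  finally have "r * (B * r\<^sup>2 - 3 * lmin * r) = r * (- 25 * \<epsilon> / 4)" by simp
  then show "r\<^sup>2 * (lmin / 2 - r * B / 6) = 25 / 24 * (r * \<epsilon>)"
    by (simp add: power2_eq_square algebra_simps)
qed

lemma local_min_in_ball_if_higher_on_sphere:
  fixes F :: "'a::heine_borel \<Rightarrow> real"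
  assumes "r \<ge> 0" and cont: "continuous_on (cball w r) F"
    and higher: "\<And>z. dist z w = r \<Longrightarrow> F w < F z"
  shows "\<exists>w'. dist w' w < r \<and> local_min F w' \<and> (\<forall>z\<in>cball w r. F w' \<le> F z)"
proof -
  obtain w' where w': "w' \<in> cball w r" "\<And>z. z \<in> cball w r \<Longrightarrow> F w' \<le> F z"
    using continuous_attains_inf[OF compact_cball _ cont] \<open>r \<ge> 0\<close> by fastforce
  have "dist w' w \<noteq> r" using higher[of w'] w'(2)[of w] \<open>r \<ge> 0\<close> by fastforce
  then have inside: "dist w' w < r" using w'(1) by (simp add: dist_commute)
  then have "local_min F w'"
    unfolding local_min_def using w'(2) by (intro exI[of _ "ball w r"]) (auto simp: dist_commute)
  with inside w'(2) show ?thesis by blast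
qed

lemma taylor_barrier_on_ball:
  fixes F :: "'a::euclidean_space \<Rightarrow> real" and D1 :: "'a \<Rightarrow>\<^sub>L real"
    and D2 :: "'a \<Rightarrow>\<^sub>L 'a \<Rightarrow>\<^sub>L real"
  assumes grad_small: "norm (grad_of D1) \<le> \<epsilon>" and hess: "\<And>u. norm u = 1 \<Longrightarrow> lmin \<le> D2 u u"
    and R_bound: "\<And>t u. t \<in> {0<..\<alpha>} \<Longrightarrow> norm u = 1 \<Longrightarrow> \<bar>taylor_R F D1 D2 w u t\<bar> \<le> B"
    and "lmin > 0" "B > 0" "\<epsilon> > 0" and disc: "9 * lmin\<^sup>2 - 25 * B * \<epsilon> \<ge> 0"
    and r_def: "r = (3 * lmin - sqrt (9 * lmin\<^sup>2 - 25 * B * \<epsilon>)) / (2 * B)" and "r < \<alpha>"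
  shows "\<And>z. z \<in> cball w r \<Longrightarrow> F w - r * \<epsilon> \<le> F z"
    and "\<And>z. dist z w = r \<Longrightarrow> F w < F z"
proof -
  note radius = taylor_radius_properties[OF \<open>lmin > 0\<close> \<open>B > 0\<close> \<open>\<epsilon> > 0\<close> disc r_def]
  have bound: "F w - dist z w * \<epsilon> + (dist z w)\<^sup>2 * (lmin / 2 - dist z w * B / 6) \<le> F z"
    if "z \<noteq> w" "dist z w \<le> r" for z
  proof -
    define t where "t = dist z w"
    have "t > 0" using that(1) by (simp add: t_def)
    moreover have "z = w + t *\<^sub>R ((1 / t) *\<^sub>R (z - w))" using \<open>t > 0\<close> by simp
    moreover have "norm ((1 / t) *\<^sub>R (z - w)) = 1" using \<open>t > 0\<close> by (simp add: t_def dist_norm)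
    ultimately show ?thesis
      using taylor_R_lower_bound[OF grad_small hess R_bound] that \<open>r < \<alpha>\<close> unfolding t_def
      by (metis greaterThanAtMost_iff less_imp_le order.trans)
  qed
  show "F w - r * \<epsilon> \<le> F z" if "z \<in> cball w r" for z
  proof (cases "z = w")
    case False
    have "dist z w * B \<le> r * B" using that \<open>B > 0\<close> by (simp add: dist_commute)
    then have "0 \<le> lmin / 2 - dist z w * B / 6" using radius(2) by linarith
    then have "0 \<le> (dist z w)\<^sup>2 * (lmin / 2 - dist z w * B / 6)" by simp
    moreover have "dist z w * \<epsilon> \<le> r * \<epsilon>" using that \<open>\<epsilon> > 0\<close> by (simp add: dist_commute)
    ultimately show ?thesis using bound[OF False] that by (simp add: dist_commute)
  qed (use radius(1) \<open>\<epsilon> > 0\<close> in simp)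
  show "F w < F z" if "dist z w = r" for z
  proof -
    have "z \<noteq> w" using that radius(1) by auto
    then have "F w - r * \<epsilon> + 25 / 24 * (r * \<epsilon>) \<le> F z" using bound[of z] that radius(3) by simp
    moreover have "r * \<epsilon> > 0" using radius(1) \<open>\<epsilon> > 0\<close> by simp
    ultimately show ?thesis by linarith
  qed
qed

lemma local_min_near_approx_critical_point:
  fixes F :: "'a::euclidean_space \<Rightarrow> real" and F1 :: "'a \<Rightarrow> ('a \<Rightarrow>\<^sub>L real)"
    and F2 :: "'a \<Rightarrow> ('a \<Rightarrow>\<^sub>L 'a \<Rightarrow>\<^sub>L real)"
  assumes "open U" and U_ball: "cball w \<alpha> \<subseteq> U"
    and D1: "\<And>x. x \<in> U \<Longrightarrow> (F has_derivative blinfun_apply (F1 x)) (at x)"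
    and D2: "\<And>x. x \<in> U \<Longrightarrow> (F1 has_derivative blinfun_apply (F2 x)) (at x)"
    and F2_cont: "isCont F2 w"
    and "\<epsilon> > 0" "B > 0" and grad_small: "norm (grad_of (F1 w)) \<le> \<epsilon>"
    and R_bound: "\<And>t u. t \<in> {0<..\<alpha>} \<Longrightarrow> norm u = 1 \<Longrightarrow> \<bar>taylor_R F (F1 w) (F2 w) w u t\<bar> \<le> B"
    and lmin_pos: "min_eig (F2 w) > 0"
    and disc: "9 * (min_eig (F2 w))\<^sup>2 - 25 * B * \<epsilon> \<ge> 0"
    and r_def: "r = (3 * min_eig (F2 w) - sqrt (9 * (min_eig (F2 w))\<^sup>2 - 25 * B * \<epsilon>)) / (2 * B)"
    and "r < \<alpha>"
  shows "\<exists>w'. local_min F w' \<and> dist w' w \<le> r \<and> F w - r * \<epsilon> \<le> F w'"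
proof -
  have "r > 0" using taylor_radius_properties(1)[OF lmin_pos \<open>B > 0\<close> \<open>\<epsilon> > 0\<close> disc r_def] .
  then have "w \<in> U" using U_ball \<open>r < \<alpha>\<close> by auto
  then have "\<And>x y. F2 w x y = F2 w y x"
    using second_derivative_symmetric[OF \<open>open U\<close> _ D1 D2 F2_cont] by blast
  note barrier = taylor_barrier_on_ball[OF grad_small min_eig_le_quadratic_form[OF this] R_bound
      lmin_pos \<open>B > 0\<close> \<open>\<epsilon> > 0\<close> disc r_def \<open>r < \<alpha>\<close>]
  have "continuous_on (cball w r) F"
  proof (intro continuous_at_imp_continuous_on ballI)
    fix z assume "z \<in> cball w r"
    then have "z \<in> U" using U_ball \<open>r < \<alpha>\<close> by auto
    then show "isCont F z" using D1 has_derivative_continuous by blast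
  qed
  then obtain w' where "dist w' w < r" "local_min F w'" "\<forall>z\<in>cball w r. F w' \<le> F z"
    using local_min_in_ball_if_higher_on_sphere barrier(2) \<open>r > 0\<close> by (metis less_imp_le)
  with barrier(1) show ?thesis by (metis dist_commute less_imp_le mem_cball order.trans)
qed

theorem lemma2:
  fixes v :: "real^'k^'k" and w :: "real^'k^'n"
    and \<alpha> \<epsilon> B :: real and U :: "(real^'k^'n) set"
    and F1 :: "real^'k^'n \<Rightarrow> ((real^'k^'n) \<Rightarrow>\<^sub>L real)"
    and F2 :: "real^'k^'n \<Rightarrow> ((real^'k^'n) \<Rightarrow>\<^sub>L (real^'k^'n) \<Rightarrow>\<^sub>L real)"
    and F3 :: "real^'k^'n \<Rightarrow> ((real^'k^'n) \<Rightarrow>\<^sub>L (real^'k^'n) \<Rightarrow>\<^sub>L (real^'k^'n) \<Rightarrow>\<^sub>L real)"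
  assumes v_unit: "\<And>i. norm (v$i) = 1"
    and v_orth: "\<And>i j. i \<noteq> j \<Longrightarrow> v$i \<bullet> v$j = 0"
    and alpha_pos: "\<alpha> > 0"
    and U_open: "open U" and U_ball: "cball w \<alpha> \<subseteq> U"
    and D1: "\<And>x. x \<in> U \<Longrightarrow> (Floss v has_derivative blinfun_apply (F1 x)) (at x)"
    and D2: "\<And>x. x \<in> U \<Longrightarrow> (F1 has_derivative blinfun_apply (F2 x)) (at x)"
    and D3: "\<And>x. x \<in> U \<Longrightarrow> (F2 has_derivative blinfun_apply (F3 x)) (at x)"
    and eps_pos: "\<epsilon> > 0" and B_pos: "B > 0"
    and grad_small: "norm (grad_of (F1 w)) \<le> \<epsilon>"
    and R_bound: "\<And>t u. t \<in> {0<..\<alpha>} \<Longrightarrow> norm u = 1 \<Longrightarrow>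
                    \<bar>taylor_R (Floss v) (F1 w) (F2 w) w u t\<bar> \<le> B"
    and lam_pos: "min_eig (F2 w) > 0"
    and disc: "9 * (min_eig (F2 w))\<^sup>2 - 25 * B * \<epsilon> \<ge> 0"
    and r_lt_alpha: "(3 * min_eig (F2 w) - sqrt (9 * (min_eig (F2 w))\<^sup>2 - 25 * B * \<epsilon>)) / (2 * B) < \<alpha>"
    and r_lt_min: "(3 * min_eig (F2 w) - sqrt (9 * (min_eig (F2 w))\<^sup>2 - 25 * B * \<epsilon>)) / (2 * B)
                     < Min (range (\<lambda>i. norm (w$i)))"
    and F_large: "let r = (3 * min_eig (F2 w) - sqrt (9 * (min_eig (F2 w))\<^sup>2 - 25 * B * \<epsilon>)) / (2 * B);
                      n = real CARD('n); k = real CARD('k);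
                      wmax = Max (range (\<lambda>i. norm (w$i)));
                      wmin = Min (range (\<lambda>i. norm (w$i)));
                      vmax = Max (range (\<lambda>i. norm (v$i)))
                  in Floss v w > r\<^sup>2 * (1/2 + n * (n - 1) * ((wmax + r) / (2 * pi * (wmin - r)) + 1/2)
                                         + n * k * vmax / (2 * pi * (wmin - r))) + r * \<epsilon>"
  shows "\<exists>w'. local_min (Floss v) w' \<and>
           dist w' w \<le> (3 * min_eig (F2 w) - sqrt (9 * (min_eig (F2 w))\<^sup>2 - 25 * B * \<epsilon>)) / (2 * B) \<and>
           Floss v w' > 0"
proof -
  define r where "r = (3 * min_eig (F2 w) - sqrt (9 * (min_eig (F2 w))\<^sup>2 - 25 * B * \<epsilon>)) / (2 * B)"
  define n where "n = real CARD('n)"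
  define k where "k = real CARD('k)"
  define wmax where "wmax = Max (range (\<lambda>i. norm (w$i)))"
  define wmin where "wmin = Min (range (\<lambda>i. norm (w$i)))"
  define vmax where "vmax = Max (range (\<lambda>i. norm (v$i)))"
  have "w \<in> U" using U_ball alpha_pos by auto
  then have "isCont F2 w" using D3 has_derivative_continuous by blast
  then obtain w' where w': "local_min (Floss v) w'" "dist w' w \<le> r" "Floss v w - r * \<epsilon> \<le> Floss v w'"
    using local_min_near_approx_critical_point[OF U_open U_ball D1 D2 _ eps_pos B_pos grad_small
        R_bound lam_pos disc r_def] r_lt_alpha unfolding r_def by blast
  have "0 \<le> r" using w'(2) zero_le_dist order.trans by blast
  moreover have "0 < 2 * pi * (wmin - r)" using r_lt_min by (simp add: r_def wmin_def)
  moreover have "0 \<le> wmax" unfolding wmax_def by (rule order.trans[OF norm_ge_zero Max_ge]) auto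
  moreover have "0 \<le> vmax" unfolding vmax_def by (rule order.trans[OF norm_ge_zero Max_ge]) auto
  moreover have "1 \<le> n" "0 \<le> k" unfolding n_def k_def by (simp_all add: Suc_le_eq)
  ultimately have "0 \<le> 1/2 + n * (n - 1) * ((wmax + r) / (2 * pi * (wmin - r)) + 1/2)
                          + n * k * vmax / (2 * pi * (wmin - r))"
    by (intro add_nonneg_nonneg mult_nonneg_nonneg divide_nonneg_pos) auto
  then have "r * \<epsilon> < Floss v w"
    using F_large unfolding Let_def r_def[symmetric] n_def[symmetric] k_def[symmetric]
      wmax_def[symmetric] wmin_def[symmetric] vmax_def[symmetric]
    by (smt (verit) zero_le_power2 mult_nonneg_nonneg)
  with w' show ?thesis unfolding r_def by auto
qed

end
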